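(* Assume $B\subseteq A\subsetneq[m]$. (a) If $q\ge3$, or $q=2$ and $|A|\le m-2$, then the dual code $\mathcal C_{\overline{\mathcal N}_2}^\perp$ is a linear code over $\mathbb F_q$ with parameters $\left[\frac{2q^{|B|+|C|}(q^m-q^{|A|})}{q-1},\ \frac{2q^{|B|+|C|}(q^m-q^{|A|})}{q-1}-2m-|C|,\ 3\right]$. (b) If $q=2$ and $|A|=m-1$, then $\mathcal C_{\overline{\mathcal N}_2}^\perp$ is a binary distance-optimal code with parameters $[2^{m+|B|+|C|},\ 2^{m+|B|+|C|}-2m-|C|,\ 4]$.
   Context: $q$ is a prime power, $\mathbb F_q$ the field of order $q$, $\mathbb F_q^*=\mathbb F_q\setminus\{0\}$, $m\ge2$, $[m]=\{1,\dots,m\}$, $\mathrm{supp}(v)=\{i:v_i\ne0\}$. For nonempty $P\subseteq[m]$, $\Delta_P=\{v\in\mathbb F_q^m:\mathrm{supp}(v)\subseteq P\}$, $\Delta_P^c=\mathbb F_q^m\setminus\Delta_P$. $A,B,C$ are nonempty subsets of $[m]$. Let $\mathcal N_2=\{(w_2+\omega,w_3,w_1)\in\mathbb F_q^{3m}: w_1\in\Delta_A^c,\ w_2\in\Delta_B,\ w_3\in\Delta_C,\ \omega\in\{\mathbf 0,w_1\}\}$ (closed under multiplication by $\mathbb F_q^*$), let $\overline{\mathcal N}_2$ contain exactly one element of each class $\{\alpha x:\alpha\in\mathbb F_q^*\}$, $x\in\mathcal N_2$, and let $\mathcal C_{\overline{\mathcal N}_2}$ be the linear code over $\mathbb F_q$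 spanned by the rows of the $3m\times|\overline{\mathcal N}_2|$ matrix whose columns are the elements of $\overline{\mathcal N}_2$. $\mathcal C^\perp$ is the dual with respect to the Euclidean inner product. An $[n,k,d]$ code is distance-optimal if no linear $[n,k,d+1]$ code over the same field exists. *)

theory Defs
  imports Complex_Main "HOL-Library.Function_Algebras" "HOL-Library.Cardinality"
begin

text \<open>Vectors of F^m are functions nat => 'a vanishing outside [m] = {1..m}.
  Vectors of F^{3m} are triples of such vectors (blocks of coordinates 1..m, m+1..2m, 2m+1..3m).\<close>

definition vecs :: "nat \<Rightarrow> (nat \<Rightarrow> 'a::zero) set" where
  "vecs m = {v. \<forall>i. i \<notin> {1..m} \<longrightarrow> v i = 0}"

definition supp :: "(nat \<Rightarrow> 'a::zero) \<Rightarrow> nat set" where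
  "supp v = {i. v i \<noteq> 0}"

definition Delta :: "nat \<Rightarrow> nat set \<Rightarrow> (nat \<Rightarrow> 'a::zero) set" where
  "Delta m P = {v \<in> vecs m. supp v \<subseteq> P}"

definition Delta_c :: "nat \<Rightarrow> nat set \<Rightarrow> (nat \<Rightarrow> 'a::zero) set" where
  "Delta_c m P = vecs m - Delta m P"

type_synonym 'a vec3 = "(nat \<Rightarrow> 'a) \<times> (nat \<Rightarrow> 'a) \<times> (nat \<Rightarrow> 'a)"

definition N2 :: "nat \<Rightarrow> nat set \<Rightarrow> nat set \<Rightarrow> nat set \<Rightarrow> ('a::comm_ring_1) vec3 set" where
  "N2 m A B C = {(\<lambda>i. w2 i + \<omega> i, w3, w1) | w1 w2 w3 \<omega>.
      w1 \<in> Delta_c m A \<and> w2 \<in> Delta m B \<and> w3 \<in> Delta m C \<and> \<omega> \<in> {(\<lambda>i. 0), w1}}"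

definition smult3 :: "'a::times \<Rightarrow> 'a vec3 \<Rightarrow> 'a vec3" where
  "smult3 \<alpha> x = (case x of (a, b, c) \<Rightarrow> (\<lambda>i. \<alpha> * a i, \<lambda>i. \<alpha> * b i, \<lambda>i. \<alpha> * c i))"

definition is_proj_reps :: "('a::field) vec3 set \<Rightarrow> 'a vec3 set \<Rightarrow> bool" where
  "is_proj_reps N Nbar \<longleftrightarrow> Nbar \<subseteq> N \<and>
     (\<forall>x \<in> N. \<exists>!y. y \<in> Nbar \<and> (\<exists>\<alpha>. \<alpha> \<noteq> 0 \<and> y = smult3 \<alpha> x))"

definition coord3 :: "'a vec3 \<Rightarrow> nat \<times> nat \<Rightarrow> 'a" where
  "coord3 x ji = (case x of (a, b, c) \<Rightarrow>
      (if fst ji = 1 then a (snd ji) else if fst ji = 2 then b (snd ji) else c (snd ji)))"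

text \<open>Words of a code indexed by a finite set I are functions vanishing outside I.\<close>
definition fscale :: "'a::times \<Rightarrow> ('b \<Rightarrow> 'a) \<Rightarrow> ('b \<Rightarrow> 'a)" where
  "fscale c v = (\<lambda>x. c * v x)"

text \<open>Rows of the 3m x |Nbar| matrix whose columns are the elements of Nbar.\<close>
definition gen_rows :: "nat \<Rightarrow> ('a::zero) vec3 set \<Rightarrow> ('a vec3 \<Rightarrow> 'a) set" where
  "gen_rows m Nbar = (\<lambda>ji. \<lambda>x. if x \<in> Nbar then coord3 x ji else 0) ` ({1,2,3} \<times> {1..m})"

definition code_of :: "nat \<Rightarrow> ('a::field) vec3 set \<Rightarrow> ('a vec3 \<Rightarrow> 'a) set" where
  "code_of m Nbar = module.span fscale (gen_rows m Nbar)"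

definition dual_code :: "'b set \<Rightarrow> ('b \<Rightarrow> 'a::field) set \<Rightarrow> ('b \<Rightarrow> 'a) set" where
  "dual_code I C = {c. (\<forall>x. x \<notin> I \<longrightarrow> c x = 0) \<and> (\<forall>c' \<in> C. (\<Sum>x\<in>I. c x * c' x) = 0)}"

definition weight :: "('b \<Rightarrow> 'a::zero) \<Rightarrow> nat" where
  "weight c = card {x. c x \<noteq> 0}"

definition min_dist :: "('b \<Rightarrow> 'a::zero) set \<Rightarrow> nat" where
  "min_dist C = Min (weight ` {c \<in> C. \<exists>x. c x \<noteq> 0})"

definition code_params :: "'b set \<Rightarrow> ('b \<Rightarrow> 'a::field) set \<Rightarrow> nat \<Rightarrow> nat \<Rightarrow> nat \<Rightarrow> bool" where
  "code_params I C n k d \<longleftrightarrow> finite I \<and> card I = n \<and>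
     C \<subseteq> {c. \<forall>x. x \<notin> I \<longrightarrow> c x = 0} \<and> module.subspace fscale C \<and>
     vector_space.dim fscale C = k \<and> min_dist C = d"

definition dist_optimal :: "'a::field itself \<Rightarrow> nat \<Rightarrow> nat \<Rightarrow> nat \<Rightarrow> bool" where
  "dist_optimal T n k d \<longleftrightarrow> \<not> (\<exists>C :: (nat \<Rightarrow> 'a) set. code_params {0..<n} C n k (d + 1))"

end

(*
  The generator matrix of the code has the elements of Nbar as columns, so the dual code is the
  kernel of the syndrome map c |-> sum_x c(x) x. Up to scalars every element of N2 is a column,
  and differences such as (w,0,w) - (0,0,w) and (0,u,e) - (0,0,e) of elements of N2 generate
  F^m x Delta_C x F^m; hence the syndrome map has rank 2m + |C|, which gives the dimension, while
  the length is |N2| / (q - 1).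

  Columns are nonzero and pairwise non-proportional, so every nonzero dual word has weight at
  least 3, and three columns with x + y = z give a word of weight 3 (for q >= 3 built from a
  scalar outside {0, -1}, for q = 2 from two coordinates outside A). If q = 2 and |A| = m - 1,
  every column has entry 1 at the unique coordinate of its last block outside A, so all dual words
  have even weight, and four columns with x1 + x4 = x2 + x3 give a word of weight 4.
  Distance-optimality is the packing bound 2^k * (n choose 2) <= 2^n for binary [n, k, 5] codes.
*)

theory Submission
  imports Defs "HOL-Library.FuncSet" "HOL-Library.Product_Plus"
begin

section \<open>Linear codes over finite fields\<close>

interpretation fv: vector_space "fscale :: 'a::field \<Rightarrow> ('b \<Rightarrow> 'a) \<Rightarrow> 'b \<Rightarrow> 'a"
  by unfold_locales (auto simp: fscale_def fun_eq_iff algebra_simps)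

lemma fscale_apply [simp]: "fscale c v x = c * v x"
  by (simp add: fscale_def)

lemma
  fixes S :: "'b set"
  assumes "finite S"
  shows finite_vanishing_outside:
      "finite {f :: 'b \<Rightarrow> 'a::{zero,finite}. \<forall>x. x \<notin> S \<longrightarrow> f x = 0}"
    and card_vanishing_outside:
      "card {f :: 'b \<Rightarrow> 'a::{zero,finite}. \<forall>x. x \<notin> S \<longrightarrow> f x = 0} = CARD('a) ^ card S"
proof -
  let ?V = "{f :: 'b \<Rightarrow> 'a. \<forall>x. x \<notin> S \<longrightarrow> f x = 0}"
  have "bij_betw (\<lambda>f. restrict f S) ?V (PiE S (\<lambda>_. UNIV))"
  proof (rule bij_betw_imageI)
    show "inj_on (\<lambda>f. restrict f S) ?V"
      by (auto simp: inj_on_def fun_eq_iff restrict_def) metis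
    show "(\<lambda>f. restrict f S) ` ?V = PiE S (\<lambda>_. UNIV)"
    proof safe
      fix g :: "'b \<Rightarrow> 'a" assume "g \<in> PiE S (\<lambda>_. UNIV)"
      then show "g \<in> (\<lambda>f. restrict f S) ` ?V"
        by (intro image_eqI[of _ _ "\<lambda>x. if x \<in> S then g x else 0"])
           (auto simp: fun_eq_iff PiE_def extensional_def)
    qed auto
  qed
  then show "finite ?V" "card ?V = CARD('a) ^ card S"
    using assms by (auto simp: bij_betw_finite bij_betw_same_card card_PiE finite_PiE)
qed

lemma card_subspace_eq_power_dim:
  fixes S :: "('b \<Rightarrow> 'a::{field,finite}) set"
  assumes "fv.subspace S" "finite S"
  shows "card S = CARD('a) ^ fv.dim S"
proof -
  obtain B where B: "B \<subseteq> S" "fv.independent B" "S \<subseteq> fv.span B" "card B = fv.dim S"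
    using fv.basis_exists by blast
  have "finite B"
    using B(1) assms(2) finite_subset by blast
  let ?comb = "\<lambda>u. \<Sum>v\<in>B. fscale (u v) v"
  have "?comb ` (PiE B (\<lambda>_. UNIV)) = range ?comb"
  proof safe
    fix u show "?comb u \<in> ?comb ` (PiE B (\<lambda>_. UNIV))"
      by (rule image_eqI[of _ _ "restrict u B"]) (auto intro!: sum.cong)
  qed auto
  also have "\<dots> = S"
    using fv.span_finite[OF \<open>finite B\<close>] fv.span_subspace[OF B(1,3) assms(1)] by simp
  finally have image: "?comb ` (PiE B (\<lambda>_. UNIV)) = S" .
  have "inj_on ?comb (PiE B (\<lambda>_. UNIV))"
  proof (rule inj_onI)
    fix u w assume u: "u \<in> PiE B (\<lambda>_. UNIV)" and w: "w \<in> PiE B (\<lambda>_. UNIV)"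
      and "?comb u = ?comb w"
    then have "(\<Sum>v\<in>B. fscale (u v - w v) v) = 0"
      by (simp add: fv.scale_left_diff_distrib sum_subtractf)
    then have "\<forall>v\<in>B. u v - w v = 0"
      using fv.independent_explicit_module[THEN iffD1, OF B(2), rule_format, OF \<open>finite B\<close> subset_refl,
          of "\<lambda>v. u v - w v"]
      by blast
    then show "u = w"
      using u w by (auto simp: PiE_def extensional_def fun_eq_iff)
  qed
  then have "card S = card (PiE B (\<lambda>_. UNIV :: 'a set))"
    using card_image image by fastforce
  then show ?thesis
    using B(4) by (simp add: card_PiE \<open>finite B\<close>)
qed

lemma card_eq_card_image_mult_card_kernel:
  fixes f :: "'a::ab_group_add \<Rightarrow> 'b::ab_group_add"
  assumes "finite V"
    and add: "\<And>x y. x \<in> V \<Longrightarrow> y \<in> V \<Longrightarrow> x + y \<in> V"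
    and diff: "\<And>x y. x \<in> V \<Longrightarrow> y \<in> V \<Longrightarrow> x - y \<in> V"
    and f_diff: "\<And>x y. x \<in> V \<Longrightarrow> y \<in> V \<Longrightarrow> f (x - y) = f x - f y"
  shows "card V = card (f ` V) * card {x \<in> V. f x = 0}"
proof -
  let ?K = "{x \<in> V. f x = 0}"
  have fibre: "card {x \<in> V. f x = f x0} = card ?K" if "x0 \<in> V" for x0
  proof -
    have "{x \<in> V. f x = f x0} = (+) x0 ` ?K"
    proof safe
      fix x assume "x \<in> V" "f x = f x0"
      then show "x \<in> (+) x0 ` ?K"
        using that by (intro image_eqI[of _ _ "x - x0"]) (auto intro: diff simp: f_diff)
    next
      fix k assume "k \<in> V" "f k = 0"
      then show "x0 + k \<in> V"
        using that add by blast
      then have "f (x0 + k - k) = f (x0 + k)"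
        using \<open>k \<in> V\<close> \<open>f k = 0\<close> f_diff[of "x0 + k" k] by simp
      then show "f (x0 + k) = f x0"
        by simp
    qed
    then show ?thesis
      by (simp add: card_image)
  qed
  have "card V = (\<Sum>y\<in>f ` V. card {x \<in> V. f x = y})"
    using sum.group[OF assms(1) finite_imageI[OF assms(1)], where g = f and h = "\<lambda>_. 1 :: nat"] by simp
  also have "\<dots> = (\<Sum>y\<in>f ` V. card ?K)"
    by (rule sum.cong) (auto simp: fibre)
  finally show ?thesis
    by simp
qed

lemma dual_code_span: "dual_code I (fv.span R) = dual_code I R"
proof
  show "dual_code I (fv.span R) \<subseteq> dual_code I R"
    using fv.span_superset by (auto simp: dual_code_def)
next
  show "dual_code I R \<subseteq> dual_code I (fv.span R)"
  proof (clarsimp simp: dual_code_def)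
    fix c c' assume orth: "\<forall>r\<in>R. (\<Sum>x\<in>I. c x * r x) = 0" and "c' \<in> fv.span R"
    from \<open>c' \<in> fv.span R\<close> show "(\<Sum>x\<in>I. c x * c' x) = 0"
    proof (induction rule: fv.span_induct_alt)
      case (step a r y)
      have "(\<Sum>x\<in>I. c x * (fscale a r + y) x) = a * (\<Sum>x\<in>I. c x * r x) + (\<Sum>x\<in>I. c x * y x)"
        by (simp add: distrib_left sum.distrib sum_distrib_left mult.left_commute)
      then show ?case
        using orth step by simp
    qed simp
  qed
qed

lemma min_dist_le_weight:
  assumes "finite Cd" "c \<in> Cd" "c \<noteq> 0"
  shows "min_dist Cd \<le> weight c"
  unfolding min_dist_def using assms by (intro Min_le) (auto simp: fun_eq_iff)

lemma min_dist_eqI: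
  assumes "finite Cd" "\<And>c. c \<in> Cd \<Longrightarrow> c \<noteq> 0 \<Longrightarrow> d \<le> weight c"
    and "c \<in> Cd" "c \<noteq> 0" "weight c = d"
  shows "min_dist Cd = d"
  unfolding min_dist_def using assms
  by (intro Min_eqI) (force simp: fun_eq_iff)+

lemma card_code_mult_choose_two_le:
  fixes Cd :: "('b \<Rightarrow> 'a::{field,finite}) set"
  assumes I: "finite I" and Cd: "Cd \<subseteq> {c. \<forall>x. x \<notin> I \<longrightarrow> c x = 0}" "fv.subspace Cd"
    and heavy: "\<And>c. c \<in> Cd \<Longrightarrow> c \<noteq> 0 \<Longrightarrow> 5 \<le> weight c"
  shows "card Cd * (card I choose 2) \<le> CARD('a) ^ card I"
proof -
  \<comment> \<open>Packing with radius 2: the translates \<open>c + 1\<^sub>P\<close> with \<open>card P = 2\<close> are pairwise distinct.\<close>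
  let ?V = "{c :: 'b \<Rightarrow> 'a. \<forall>x. x \<notin> I \<longrightarrow> c x = 0}"
  let ?P2 = "{P. P \<subseteq> I \<and> card P = 2}"
  let ?ind = "\<lambda>P x. of_bool (x \<in> P) :: 'a"
  let ?shift = "\<lambda>(c, P). c + ?ind P"
  have "inj_on ?shift (Cd \<times> ?P2)"
  proof (rule inj_onI)
    fix p p' assume "p \<in> Cd \<times> ?P2" "p' \<in> Cd \<times> ?P2" "?shift p = ?shift p'"
    then obtain c P c' Q where p: "p = (c, P)" "p' = (c', Q)"
      and c: "c \<in> Cd" "c' \<in> Cd" and PQ: "P \<in> ?P2" "Q \<in> ?P2"
      and eq: "c + ?ind P = c' + ?ind Q"
      by auto
    have "c = c'"
    proof (rule ccontr)
      assume "c \<noteq> c'"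
      have "c - c' = ?ind Q - ?ind P"
        using eq by (simp add: algebra_simps eq_diff_eq diff_eq_eq)
      then have "{x. (c - c') x \<noteq> 0} \<subseteq> P \<union> Q"
        by auto
      moreover have "finite P" "finite Q"
        using PQ I finite_subset by auto
      ultimately have "weight (c - c') \<le> card P + card Q"
        unfolding weight_def by (meson card_Un_le card_mono finite_UnI order_trans)
      moreover have "5 \<le> weight (c - c')"
        using heavy fv.subspace_diff[OF Cd(2) c] \<open>c \<noteq> c'\<close> by simp
      ultimately show False
        using PQ by simp
    qed
    moreover from this have "P = Q"
      using eq by (simp add: fun_eq_iff set_eq_iff of_bool_eq_iff)
    ultimately show "p = p'"
      using p by simp
  qed
  moreover have "?shift ` (Cd \<times> ?P2) \<subseteq> ?V"
    using Cd(1) by fastforce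
  ultimately have "card (Cd \<times> ?P2) \<le> card ?V"
    using card_inj_on_le finite_vanishing_outside[OF I] by blast
  then show ?thesis
    using card_vanishing_outside[OF I, where 'a='a] n_subsets[OF I, of 2] by (simp add: card_cartesian_product)
qed

lemma two_power_less_choose_two:
  assumes "r + 3 \<le> 2 * N"
  shows "2 ^ r < (2 ^ N choose 2 :: nat)"
proof -
  obtain M where N: "N = Suc M"
    using assms by (cases N) auto
  have "(2 :: nat) ^ r < 2 ^ (2 * M)"
    using assms N by simp
  also have "\<dots> = 2 ^ M * 2 ^ M"
    by (simp only: mult_2 power_add)
  also have "\<dots> \<le> 2 ^ M * (2 * 2 ^ M - 1)"
    by simp
  also have "\<dots> = 2 ^ N choose 2"
    by (simp add: N choose_two)
  finally show ?thesis .
qed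

lemma dist_optimal_4_if_power_less_choose_two:
  assumes "CARD('a::{field,finite}) ^ r < n choose 2"
  shows "dist_optimal TYPE('a) n (n - r) 4"
  unfolding dist_optimal_def
proof
  let ?q = "CARD('a)"
  assume "\<exists>Cd :: (nat \<Rightarrow> 'a) set. code_params {0..<n} Cd n (n - r) (4 + 1)"
  then obtain Cd :: "(nat \<Rightarrow> 'a) set" where Cd: "Cd \<subseteq> {c. \<forall>x. x \<notin> {0..<n} \<longrightarrow> c x = 0}"
    "fv.subspace Cd" "fv.dim Cd = n - r" "min_dist Cd = 5"
    by (auto simp: code_params_def)
  have "finite Cd"
    using Cd(1) finite_vanishing_outside[of "{0..<n}"] finite_subset by blast
  then have "5 \<le> weight c" if "c \<in> Cd" "c \<noteq> 0" for c
    using min_dist_le_weight that Cd(4) by metis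
  then have "card Cd * (card {0..<n} choose 2) \<le> ?q ^ card {0..<n}"
    by (intro card_code_mult_choose_two_le[OF _ Cd(1,2)]) simp_all
  then have "card Cd * (n choose 2) \<le> ?q ^ n"
    by simp
  also have "\<dots> \<le> ?q ^ (n - r) * ?q ^ r"
    by (simp add: power_add[symmetric] power_increasing)
  finally have "?q ^ (n - r) * (n choose 2) \<le> ?q ^ (n - r) * ?q ^ r"
    using card_subspace_eq_power_dim[OF Cd(2) \<open>finite Cd\<close>] Cd(3) by simp
  then have "n choose 2 \<le> ?q ^ r"
    by (rule mult_left_le_imp_le) simp
  then show False
    using assms by (simp add: not_le[symmetric])
qed

lemma one_less_card_field: "1 < CARD('a::{field,finite})"
proof -
  have "card {0 :: 'a, 1} \<le> CARD('a)"
    by (rule card_mono) simp_all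
  then show ?thesis
    by simp
qed

lemma exists_not_0_not_minus_1:
  assumes "3 \<le> CARD('a::{field,finite})"
  shows "\<exists>\<alpha> :: 'a. \<alpha> \<noteq> 0 \<and> 1 + \<alpha> \<noteq> 0"
proof -
  have "card {0 :: 'a, -1} \<noteq> CARD('a)"
    using assms card_insert_le_m1[of 2 "{-1 :: 'a}"] by (auto simp: card_insert_if)
  then have "{0 :: 'a, -1} \<noteq> UNIV"
    by (rule contrapos_nn) simp
  then show ?thesis
    by (auto simp: add_eq_0_iff)
qed

lemma card_2_field_cases: "CARD('a::{field,finite}) = 2 \<Longrightarrow> (x :: 'a) = 0 \<or> x = 1"
  using card_subset_eq[of UNIV "{0 :: 'a, 1}"] by auto

lemma card_2_field_of_nat_eq_0:
  assumes "CARD('a::{field,finite}) = 2"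
  shows "of_nat n = (0 :: 'a) \<longleftrightarrow> even n"
proof (induction n)
  case (Suc n)
  have "(1 :: 'a) + 1 \<noteq> 1"
    by (metis add_cancel_right_right one_neq_zero)
  then have "(1 :: 'a) + 1 = 0"
    using card_2_field_cases[OF assms] by blast
  with Suc show ?case
    using card_2_field_cases[OF assms, of "of_nat n"] by auto
qed simp

section \<open>Vectors with prescribed support\<close>

lemma Delta_eq: "P \<subseteq> {1..m} \<Longrightarrow> Delta m P = {v. \<forall>i. i \<notin> P \<longrightarrow> v i = 0}"
  by (auto simp: Delta_def vecs_def supp_def)

lemma vecs_eq_Delta: "vecs m = Delta m {1..m}"
  by (auto simp: Delta_def vecs_def supp_def)

lemma subspace_Delta: "fv.subspace (Delta m P :: (nat \<Rightarrow> 'a::field) set)"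
  by (auto simp: fv.subspace_def Delta_def vecs_def supp_def subset_iff) (metis add_0)

lemma zero_in_Delta [simp]: "0 \<in> Delta m P"
  by (simp add: Delta_def vecs_def supp_def)

lemma Delta_mono: "P \<subseteq> Q \<Longrightarrow> Delta m P \<subseteq> Delta m Q"
  by (auto simp: Delta_def)

lemma Delta_c_memI: "v \<in> vecs m \<Longrightarrow> i \<notin> P \<Longrightarrow> v i \<noteq> 0 \<Longrightarrow> v \<in> Delta_c m P"
  by (auto simp: Delta_c_def Delta_def supp_def)

lemma Delta_c_subset_vecs: "Delta_c m P \<subseteq> vecs m"
  by (auto simp: Delta_c_def)

lemma zero_notin_Delta_c [simp]: "0 \<notin> Delta_c m P"
  by (simp add: Delta_c_def)

lemma fscale_in_Delta_c:
  fixes \<alpha> :: "'a::field"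
  assumes "v \<in> Delta_c m P" "\<alpha> \<noteq> 0"
  shows "fscale \<alpha> v \<in> Delta_c m P"
proof -
  have "fscale (inverse \<alpha>) (fscale \<alpha> v) = v"
    using assms(2) by (simp add: fun_eq_iff)
  then have "fscale \<alpha> v \<notin> Delta m P"
    using assms(1) fv.subspace_scale[OF subspace_Delta] by (metis DiffD2 Delta_c_def)
  moreover have "fscale \<alpha> v \<in> vecs m"
    using assms(1) by (auto simp: Delta_c_def vecs_def)
  ultimately show ?thesis
    by (simp add: Delta_c_def)
qed

lemma Delta_c_or_add_unit:
  fixes v :: "nat \<Rightarrow> 'a::field"
  assumes "v \<in> vecs m" "t \<in> {1..m}" "t \<notin> P"
  shows "v \<in> Delta_c m P \<or> v + 0(t := 1) \<in> Delta_c m P"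
proof (cases "v \<in> Delta_c m P")
  case False
  then have "v t = 0"
    using assms by (auto simp: Delta_c_def Delta_def supp_def)
  then have "v + 0(t := 1) \<in> Delta_c m P"
    using assms by (intro Delta_c_memI[where i = t]) (auto simp: vecs_def)
  then show ?thesis ..
qed simp

lemma finite_vecs: "finite (vecs m :: (nat \<Rightarrow> 'a::{zero,finite}) set)"
  unfolding vecs_def by (rule finite_vanishing_outside) simp

lemma card_vecs: "card (vecs m :: (nat \<Rightarrow> 'a::{zero,finite}) set) = CARD('a) ^ m"
  unfolding vecs_def by (subst card_vanishing_outside) simp_all

lemma finite_Delta: "finite (Delta m P :: (nat \<Rightarrow> 'a::{zero,finite}) set)"
  using finite_vecs by (rule finite_subset[rotated]) (auto simp: Delta_def)

lemma card_Delta: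
  assumes "P \<subseteq> {1..m}"
  shows "card (Delta m P :: (nat \<Rightarrow> 'a::{zero,finite}) set) = CARD('a) ^ card P"
proof -
  have "finite P"
    using assms finite_subset by blast
  then show ?thesis
    by (simp add: Delta_eq[OF assms] card_vanishing_outside)
qed

lemma card_Delta_c:
  assumes "P \<subseteq> {1..m}"
  shows "card (Delta_c m P :: (nat \<Rightarrow> 'a::{zero,finite}) set) = CARD('a) ^ m - CARD('a) ^ card P"
proof -
  have "Delta m P \<subseteq> (vecs m :: (nat \<Rightarrow> 'a) set)"
    by (auto simp: Delta_def)
  then show ?thesis
    using assms by (simp add: Delta_c_def card_Diff_subset finite_Delta card_vecs card_Delta)
qed

section \<open>The set N2\<close>

lemma smult3_Pair [simp]: "smult3 \<alpha> (u, v, w) = (fscale \<alpha> u, fscale \<alpha> v, fscale \<alpha> w)"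
  by (simp add: smult3_def fscale_def)

definition N2_param :: "(nat \<Rightarrow> 'a) \<times> (nat \<Rightarrow> 'a) \<times> (nat \<Rightarrow> 'a) \<times> bool \<Rightarrow> 'a::plus vec3" where
  "N2_param = (\<lambda>(w1, w2, w3, b). (if b then w2 + w1 else w2, w3, w1))"

lemma N2_eq_image: "(N2 m A B C :: 'a::comm_ring_1 vec3 set) = N2_param ` (Delta_c m A \<times> Delta m B \<times> Delta m C \<times> UNIV)"
proof (intro equalityI subsetI)
  fix x :: "'a vec3" assume "x \<in> N2 m A B C"
  then obtain w1 w2 w3 \<omega> where x: "x = (\<lambda>i. w2 i + \<omega> i, w3, w1)" and \<omega>: "\<omega> \<in> {\<lambda>i. 0, w1}"
    and w: "w1 \<in> Delta_c m A" "w2 \<in> Delta m B" "w3 \<in> Delta m C"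
    unfolding N2_def mem_Collect_eq by (elim exE conjE) simp
  from x \<omega> have "x = N2_param (w1, w2, w3, \<omega> = w1)"
    by (auto simp: N2_param_def fun_eq_iff)
  with w show "x \<in> N2_param ` (Delta_c m A \<times> Delta m B \<times> Delta m C \<times> UNIV)"
    by blast
next
  fix x :: "'a vec3" assume "x \<in> N2_param ` (Delta_c m A \<times> Delta m B \<times> Delta m C \<times> UNIV)"
  then obtain w1 w2 w3 b where x: "x = N2_param (w1, w2, w3, b)"
    and w: "w1 \<in> Delta_c m A" "w2 \<in> Delta m B" "w3 \<in> Delta m C"
    by blast
  then have "x = (\<lambda>i. w2 i + (if b then w1 else (\<lambda>i. 0)) i, w3, w1)"
    by (auto simp: N2_param_def fun_eq_iff)
  with w show "x \<in> N2 m A B C"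
    unfolding N2_def by (intro CollectI exI[of _ w1] exI[of _ w2] exI[of _ w3]
        exI[of _ "if b then w1 else (\<lambda>i. 0)"]) auto
qed

lemma
  assumes "w1 \<in> Delta_c m A" "w2 \<in> Delta m B" "w3 \<in> Delta m C"
  shows N2_memI: "(w2, w3, w1) \<in> N2 m A B C"
    and N2_memI_shifted: "(w2 + w1, w3, w1) \<in> N2 m A B C"
  unfolding N2_eq_image using assms
  by (force simp: N2_param_def intro: image_eqI[of _ _ "(w1, w2, w3, False)"],
      force simp: N2_param_def intro: image_eqI[of _ _ "(w1, w2, w3, True)"])

lemma N2_subset: "(N2 m A B C :: 'a::comm_ring_1 vec3 set) \<subseteq> vecs m \<times> Delta m C \<times> Delta_c m A"
proof
  fix x :: "'a vec3" assume "x \<in> N2 m A B C"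
  then obtain w1 w2 w3 b where x: "x = N2_param (w1, w2, w3, b)"
    and w: "w1 \<in> Delta_c m A" "w2 \<in> Delta m B" "w3 \<in> Delta m C"
    unfolding N2_eq_image by blast
  have "w1 \<in> vecs m" "w2 \<in> vecs m"
    using w(1,2) Delta_c_subset_vecs by (auto simp: Delta_def)
  then have "w2 + w1 \<in> vecs m"
    by (auto simp: vecs_def)
  with \<open>w2 \<in> vecs m\<close> w show "x \<in> vecs m \<times> Delta m C \<times> Delta_c m A"
    by (simp add: x N2_param_def)
qed

lemma zero_notin_N2: "(0 :: 'a::comm_ring_1 vec3) \<notin> N2 m A B C"
proof
  assume "(0 :: 'a vec3) \<in> N2 m A B C"
  then have "(0 :: 'a vec3) \<in> vecs m \<times> Delta m C \<times> Delta_c m A"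
    using N2_subset by blast
  then show False
    by (simp add: mem_Times_iff)
qed

lemma smult3_in_N2:
  fixes \<alpha> :: "'a::field"
  assumes "x \<in> N2 m A B C" "\<alpha> \<noteq> 0"
  shows "smult3 \<alpha> x \<in> N2 m A B C"
proof -
  obtain w1 w2 w3 b where x: "x = N2_param (w1, w2, w3, b)"
    and w: "w1 \<in> Delta_c m A" "w2 \<in> Delta m B" "w3 \<in> Delta m C"
    using assms(1) unfolding N2_eq_image by auto
  have "smult3 \<alpha> x = N2_param (fscale \<alpha> w1, fscale \<alpha> w2, fscale \<alpha> w3, b)"
    by (simp add: x N2_param_def fun_eq_iff distrib_left)
  moreover have "fscale \<alpha> w1 \<in> Delta_c m A" "fscale \<alpha> w2 \<in> Delta m B" "fscale \<alpha> w3 \<in> Delta m C"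
    using w assms(2) by (simp_all add: fscale_in_Delta_c fv.subspace_scale[OF subspace_Delta])
  ultimately show ?thesis
    unfolding N2_eq_image by blast
qed

lemma inj_on_N2_param:
  assumes "B \<subseteq> A"
  shows "inj_on (N2_param :: _ \<Rightarrow> 'a::field vec3) (Delta_c m A \<times> Delta m B \<times> Delta m C \<times> UNIV)"
proof (rule inj_onI)
  fix p p' assume "p \<in> Delta_c m A \<times> Delta m B \<times> Delta m C \<times> UNIV"
    "p' \<in> Delta_c m A \<times> Delta m B \<times> Delta m C \<times> UNIV" "(N2_param p :: 'a vec3) = N2_param p'"
  then obtain w1 w2 w3 b w1' w2' w3' b' where p: "p = (w1, w2, w3, b)" "p' = (w1', w2', w3', b')"
    and w: "w1 \<in> Delta_c m A" "w2 \<in> Delta m B" "w2' \<in> Delta m B"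
    and eq: "(if b then w2 + w1 else w2) = (if b' then w2' + w1' else w2')" "w3 = w3'" "w1 = w1'"
    by (cases p; cases p') (simp add: N2_param_def)
  have "b = b'"
  proof (rule ccontr)
    assume "b \<noteq> b'"
    with eq(1,3) have "w1 = w2' - w2 \<or> w1 = w2 - w2'"
      by (cases b) (simp_all add: eq_diff_eq add.commute)
    moreover have wA: "w2 \<in> Delta m A" "w2' \<in> Delta m A"
      using w(2,3) Delta_mono[OF assms] by blast+
    ultimately have "w1 \<in> Delta m A"
      using fv.subspace_diff[OF subspace_Delta wA(1,2)] fv.subspace_diff[OF subspace_Delta wA(2,1)]
      by auto
    then show False
      using w(1) by (simp add: Delta_c_def)
  qed
  with eq(1,3) have "w2 = w2'"
    by (cases b) simp_all
  with p eq(2,3) \<open>b = b'\<close> show "p = p'"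
    by simp
qed

lemma card_N2:
  assumes "B \<subseteq> A" "A \<subseteq> {1..m}" "C \<subseteq> {1..m}"
  shows "card (N2 m A B C :: 'a::{field,finite} vec3 set)
      = 2 * CARD('a) ^ (card B + card C) * (CARD('a) ^ m - CARD('a) ^ card A)"
proof -
  have "card (N2 m A B C :: 'a vec3 set)
      = card ((Delta_c m A :: (nat \<Rightarrow> 'a) set) \<times> (Delta m B :: (nat \<Rightarrow> 'a) set)
          \<times> (Delta m C :: (nat \<Rightarrow> 'a) set) \<times> (UNIV :: bool set))"
    unfolding N2_eq_image by (rule card_image[OF inj_on_N2_param[OF assms(1)]])
  also have "\<dots> = (CARD('a) ^ m - CARD('a) ^ card A) * (CARD('a) ^ card B * (CARD('a) ^ card C * 2))"
    using assms subset_trans[OF assms(1,2)] by (simp add: card_cartesian_product card_Delta_c card_Delta)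
  finally show ?thesis
    by (simp add: power_add mult_ac)
qed

lemma finite_N2: "finite (N2 m A B C :: 'a::{field,finite} vec3 set)"
  unfolding N2_eq_image
  by (intro finite_imageI finite_cartesian_product finite_Delta
      finite_subset[OF Delta_c_subset_vecs finite_vecs]) simp

lemma image_vecs_subset_if_image_Delta_c_subset:
  fixes f :: "(nat \<Rightarrow> 'a::field) \<Rightarrow> 'b::ab_group_add"
  assumes "A \<subset> {1..m}" "f ` Delta_c m A \<subseteq> G" "\<And>v w. f (v - w) = f v - f w"
    and diff: "\<And>x y. x \<in> G \<Longrightarrow> y \<in> G \<Longrightarrow> x - y \<in> G"
  shows "f ` vecs m \<subseteq> G"
proof
  fix x assume "x \<in> f ` vecs m"
  then obtain v where v: "v \<in> vecs m" "x = f v"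
    by blast
  obtain t where t: "t \<in> {1..m}" "t \<notin> A"
    using assms(1) by blast
  define e :: "nat \<Rightarrow> 'a" where "e = 0(t := 1)"
  have "e \<in> Delta_c m A"
    using t by (intro Delta_c_memI[where i = t]) (auto simp: e_def vecs_def)
  with Delta_c_or_add_unit[OF v(1) t] assms(2) have "f v \<in> G \<or> f (v + e) - f e \<in> G"
    unfolding e_def[symmetric] using diff by blast
  then show "x \<in> G"
    using assms(3)[of "v + e" e] v(2) by auto
qed

lemma N2_generates:
  fixes G :: "'a::field vec3 set"
  assumes "A \<subset> {1..m}" "N2 m A B C \<subseteq> G"
    and add: "\<And>x y. x \<in> G \<Longrightarrow> y \<in> G \<Longrightarrow> x + y \<in> G"
    and diff: "\<And>x y. x \<in> G \<Longrightarrow> y \<in> G \<Longrightarrow> x - y \<in> G"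
  shows "vecs m \<times> Delta m C \<times> vecs m \<subseteq> G"
proof -
  have N2_G: "(w2, w3, w1) \<in> G" "(w2 + w1, w3, w1) \<in> G"
    if "w1 \<in> Delta_c m A" "w2 \<in> Delta m B" "w3 \<in> Delta m C" for w1 w2 w3 :: "nat \<Rightarrow> 'a"
    using that N2_memI N2_memI_shifted assms(2) by blast+
  have first: "(\<lambda>v. (v, 0, 0)) ` vecs m \<subseteq> G"
  proof (rule image_vecs_subset_if_image_Delta_c_subset[OF assms(1) _ _ diff])
    show "(\<lambda>v. (v, 0, 0)) ` Delta_c m A \<subseteq> G"
    proof (rule image_subsetI)
      fix w :: "nat \<Rightarrow> 'a" assume "w \<in> Delta_c m A"
      then have "(0 + w, 0, w) \<in> G" "(0, 0, w) \<in> G"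
        using N2_G[of w 0 0] by simp_all
      then have "(0 + w, 0, w) - (0, 0, w) \<in> G"
        by (rule diff)
      then show "(w, 0, 0) \<in> G"
        by (simp add: zero_prod_def)
    qed
  qed (simp add: zero_prod_def fun_eq_iff)
  have third: "(\<lambda>v. (0, 0, v)) ` vecs m \<subseteq> G"
    by (rule image_vecs_subset_if_image_Delta_c_subset[OF assms(1) _ _ diff])
      (use N2_G[of _ 0 0] in \<open>auto simp: zero_prod_def\<close>)
  obtain t where t: "t \<in> {1..m}" "t \<notin> A"
    using assms(1) by blast
  have e: "(0 :: nat \<Rightarrow> 'a)(t := 1) \<in> Delta_c m A"
    using t by (intro Delta_c_memI[where i = t]) (auto simp: vecs_def)
  have second: "(0, u, 0) \<in> G" if "u \<in> Delta m C" for u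
  proof -
    have "(0, u, 0(t := 1)) \<in> G" "(0, 0, 0(t := 1)) \<in> G"
      using N2_G[OF e, of 0 u] N2_G[OF e, of 0 0] that by simp_all
    then have "(0, u, 0(t := 1)) - (0, 0, 0(t := 1)) \<in> G"
      by (rule diff)
    then show ?thesis
      by (simp add: zero_prod_def)
  qed
  show ?thesis
  proof clarify
    fix a b c :: "nat \<Rightarrow> 'a" assume "a \<in> vecs m" "b \<in> Delta m C" "c \<in> vecs m"
    then have "(a, 0, 0) + (0, b, 0) + (0, 0, c) \<in> G"
      using first third by (intro add second) auto
    then show "(a, b, c) \<in> G"
      by simp
  qed
qed

lemma N2_third_block_eq_1_if_card_2:
  assumes "CARD('a::{field,finite}) = 2" "{1..m} - A = {t}" "(x :: 'a vec3) \<in> N2 m A B C"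
  shows "snd (snd x) t = 1"
proof -
  have "x \<in> vecs m \<times> Delta m C \<times> Delta_c m A"
    using assms(3) N2_subset by blast
  then have "snd (snd x) \<in> Delta_c m A"
    by (simp add: mem_Times_iff)
  then obtain i where "snd (snd x) i \<noteq> 0" "i \<in> {1..m} - A"
    by (auto simp: Delta_c_def Delta_def supp_def vecs_def)
  with assms(2) have "snd (snd x) t \<noteq> 0"
    by simp
  then show ?thesis
    using card_2_field_cases[OF assms(1)] by blast
qed

section \<open>Projective representatives\<close>

interpretation v3: vector_space "smult3 :: 'a::field \<Rightarrow> 'a vec3 \<Rightarrow> 'a vec3"
  by unfold_locales (simp_all add: smult3_def case_prod_beta prod_eq_iff fun_eq_iff algebra_simps)

lemma proj_reps_exists:
  assumes "is_proj_reps N Nbar" "x \<in> N"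
  obtains y \<alpha> where "y \<in> Nbar" "\<alpha> \<noteq> 0" "y = smult3 \<alpha> x"
proof -
  have "\<exists>!y. y \<in> Nbar \<and> (\<exists>\<alpha>. \<alpha> \<noteq> 0 \<and> y = smult3 \<alpha> x)"
    using assms by (simp add: is_proj_reps_def)
  then show ?thesis
    using that by (elim ex1E exE conjE) simp
qed

definition pairwise_nonproportional :: "'a::field vec3 set \<Rightarrow> bool" where
  "pairwise_nonproportional T \<longleftrightarrow> (\<forall>x\<in>T. \<forall>y\<in>T. \<forall>\<beta>. \<beta> \<noteq> 0 \<longrightarrow> y = smult3 \<beta> x \<longrightarrow> y = x)"

lemma proj_reps_choose:
  assumes reps: "is_proj_reps N Nbar" and "T \<subseteq> N" and nonprop: "pairwise_nonproportional T"
  obtains rep al where "\<And>x. x \<in> T \<Longrightarrow> rep x \<in> Nbar" "\<And>x. x \<in> T \<Longrightarrow> al x \<noteq> 0"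
    "\<And>x. x \<in> T \<Longrightarrow> rep x = smult3 (al x) x" "inj_on rep T"
proof -
  have "\<forall>x\<in>T. \<exists>y \<alpha>. y \<in> Nbar \<and> \<alpha> \<noteq> 0 \<and> y = smult3 \<alpha> x"
    using assms(2) by (blast elim: proj_reps_exists[OF reps])
  then obtain rep al where rep: "\<And>x. x \<in> T \<Longrightarrow> rep x \<in> Nbar"
    and al: "\<And>x. x \<in> T \<Longrightarrow> al x \<noteq> 0" and rep_al: "\<And>x. x \<in> T \<Longrightarrow> rep x = smult3 (al x) x"
    by metis
  moreover have "inj_on rep T"
  proof (rule inj_onI)
    fix x y assume xy: "x \<in> T" "y \<in> T" "rep x = rep y"
    have eq: "smult3 (al y) y = smult3 (al x) x"
      using rep_al[OF xy(1)] rep_al[OF xy(2)] xy(3) by simp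
    have "y = smult3 (inverse (al y)) (smult3 (al y) y)"
      using al[OF xy(2)] by simp
    also have "\<dots> = smult3 (inverse (al y) * al x) x"
      by (simp only: eq v3.scale_scale)
    finally have "y = smult3 (inverse (al y) * al x) x" .
    moreover have "inverse (al y) * al x \<noteq> 0"
      using al xy by simp
    ultimately show "x = y"
      using nonprop xy(1,2) unfolding pairwise_nonproportional_def by blast
  qed
  ultimately show ?thesis
    using that by blast
qed

lemma proj_reps_unique:
  assumes "is_proj_reps N Nbar" "y \<in> Nbar" "z \<in> Nbar" "\<beta> \<noteq> 0" "z = smult3 \<beta> y"
  shows "z = y"
proof -
  have "y \<in> N"
    using assms(1,2) by (auto simp: is_proj_reps_def)
  then have "\<exists>!y'. y' \<in> Nbar \<and> (\<exists>\<alpha>. \<alpha> \<noteq> 0 \<and> y' = smult3 \<alpha> y)"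
    using assms(1) by (simp add: is_proj_reps_def)
  moreover have "\<exists>\<alpha>. \<alpha> \<noteq> 0 \<and> y = smult3 \<alpha> y"
    by (intro exI[of _ 1]) simp
  ultimately show ?thesis
    using assms(2-5) by blast
qed

lemma proj_reps_pair_independent:
  assumes "is_proj_reps N Nbar" "0 \<notin> N" "y \<in> Nbar" "z \<in> Nbar" "y \<noteq> z"
    and "smult3 a y + smult3 b z = 0"
  shows "a = 0 \<and> b = 0"
proof -
  have "y \<noteq> 0" "z \<noteq> 0"
    using assms(1-4) by (auto simp: is_proj_reps_def)
  have "b = 0"
  proof (rule ccontr)
    assume "b \<noteq> 0"
    have "z = smult3 (inverse b) (smult3 b z)"
      using \<open>b \<noteq> 0\<close> by simp
    also have "\<dots> = smult3 (- (inverse b * a)) y"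
      using assms(6) by (simp add: add_eq_0_iff)
    finally have z: "z = smult3 (- (inverse b * a)) y" .
    then have "- (inverse b * a) \<noteq> 0"
      using \<open>z \<noteq> 0\<close> by auto
    then have "z = y"
      by (rule proj_reps_unique[OF assms(1,3,4) _ z])
    with assms(5) show False
      by simp
  qed
  with assms(6) \<open>y \<noteq> 0\<close> show ?thesis
    by simp
qed

lemma inj_on_scale_proj_reps:
  assumes reps: "is_proj_reps N Nbar" and "0 \<notin> N"
  shows "inj_on (\<lambda>(y, \<alpha>). smult3 \<alpha> y) (Nbar \<times> (UNIV - {0}))"
proof (rule inj_onI)
  fix p p' assume pp': "p \<in> Nbar \<times> (UNIV - {0})" "p' \<in> Nbar \<times> (UNIV - {0})"
    "(\<lambda>(y, \<alpha>). smult3 \<alpha> y) p = (\<lambda>(y, \<alpha>). smult3 \<alpha> y) p'"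
  obtain y \<alpha> z \<beta> where p: "p = (y, \<alpha>)" "p' = (z, \<beta>)"
    by (cases p, cases p')
  with pp' have yz: "y \<in> Nbar" "z \<in> Nbar" "\<alpha> \<noteq> 0" "\<beta> \<noteq> 0" and eq: "smult3 \<alpha> y = smult3 \<beta> z"
    by simp_all
  have "z = smult3 (inverse \<beta>) (smult3 \<beta> z)"
    using yz(4) by simp
  also have "\<dots> = smult3 (inverse \<beta> * \<alpha>) y"
    by (simp only: eq[symmetric] v3.scale_scale)
  finally have z: "z = smult3 (inverse \<beta> * \<alpha>) y" .
  have "z = y"
    by (rule proj_reps_unique[OF reps yz(1,2) _ z]) (use yz(3,4) in simp)
  moreover have "y \<noteq> 0"
    using yz(1) reps \<open>0 \<notin> N\<close> by (auto simp: is_proj_reps_def)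
  ultimately have "\<alpha> = \<beta>"
    using eq by simp
  with \<open>z = y\<close> show "p = p'"
    using p by simp
qed

lemma card_proj_reps:
  fixes N :: "'a::{field,finite} vec3 set"
  assumes reps: "is_proj_reps N Nbar" and "0 \<notin> N"
    and scale: "\<And>x \<alpha>. x \<in> N \<Longrightarrow> \<alpha> \<noteq> 0 \<Longrightarrow> smult3 \<alpha> x \<in> N"
  shows "card N = card Nbar * (CARD('a) - 1)"
proof -
  let ?scale = "\<lambda>(y, \<alpha>). smult3 \<alpha> y"
  have "?scale ` (Nbar \<times> (UNIV - {0 :: 'a})) = N"
  proof (rule equalityI)
    show "?scale ` (Nbar \<times> (UNIV - {0 :: 'a})) \<subseteq> N"
    proof (rule image_subsetI)
      fix p assume "p \<in> Nbar \<times> (UNIV - {0 :: 'a})"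
      then have "fst p \<in> N" "snd p \<noteq> 0"
        using reps by (auto simp: mem_Times_iff is_proj_reps_def)
      then show "?scale p \<in> N"
        using scale by (simp add: case_prod_beta)
    qed
    show "N \<subseteq> ?scale ` (Nbar \<times> (UNIV - {0 :: 'a}))"
    proof (rule subsetI)
      fix x assume "x \<in> N"
      with reps obtain y \<alpha> where y: "y \<in> Nbar" "\<alpha> \<noteq> 0" "y = smult3 \<alpha> x"
        by (rule proj_reps_exists)
      then have "x = smult3 (inverse \<alpha>) y"
        by simp
      with y(1,2) show "x \<in> ?scale ` (Nbar \<times> (UNIV - {0 :: 'a}))"
        by (intro image_eqI[of _ _ "(y, inverse \<alpha>)"]) simp_all
    qed
  qed
  then have "card N = card (Nbar \<times> (UNIV - {0 :: 'a}))"
    using card_image[OF inj_on_scale_proj_reps[OF assms(1,2)]] by simp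
  then show ?thesis
    by (simp add: card_cartesian_product card_Diff_subset)
qed

lemma smult3_eq_self_if_card_2:
  "CARD('a::{field,finite}) = 2 \<Longrightarrow> \<beta> \<noteq> 0 \<Longrightarrow> smult3 \<beta> x = (x :: 'a vec3)"
  using card_2_field_cases[of \<beta>] by auto

lemma coord3_smult3: "coord3 (smult3 \<beta> x) s = \<beta> * coord3 x s"
  by (cases x) (simp add: coord3_def smult3_def)

lemma not_proportional_if_det:
  assumes "coord3 x s * coord3 y s' \<noteq> coord3 x s' * coord3 y s"
  shows "y \<noteq> smult3 \<beta> (x :: 'a::comm_ring_1 vec3)"
proof
  assume "y = smult3 \<beta> x"
  then show False
    using assms by (simp add: coord3_smult3 mult.left_commute)
qed

section \<open>Syndromes\<close>

text \<open>The generator matrix of \<open>code_of m N\<close> has the elements of \<open>N\<close> as columns, so the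
  syndrome map is a parity-check map of its dual code.\<close>

definition syndrome :: "'a::field vec3 set \<Rightarrow> ('a vec3 \<Rightarrow> 'a) \<Rightarrow> 'a vec3" where
  "syndrome N c = (\<Sum>x\<in>N. smult3 (c x) x)"

definition syndrome_kernel :: "'a::field vec3 set \<Rightarrow> ('a vec3 \<Rightarrow> 'a) set" where
  "syndrome_kernel N = {c. (\<forall>x. x \<notin> N \<longrightarrow> c x = 0) \<and> syndrome N c = 0}"

lemma sum_fun_apply: "(\<Sum>x\<in>N. f x) i = (\<Sum>x\<in>N. f x i)"
  by (induction N rule: infinite_finite_induct) simp_all

lemma coord3_conv:
  "coord3 x s = (if fst s = 1 then fst x (snd s) else if fst s = 2 then fst (snd x) (snd s)
     else snd (snd x) (snd s))"
  by (cases x) (simp add: coord3_def)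

lemma coord3_syndrome: "coord3 (syndrome N c) s = (\<Sum>x\<in>N. c x * coord3 x s)"
  by (simp add: coord3_conv syndrome_def fst_sum snd_sum sum_fun_apply smult3_def case_prod_beta)

lemma vec3_eq_0_iff_coord3:
  assumes "x \<in> vecs m \<times> vecs m \<times> vecs m"
  shows "x = 0 \<longleftrightarrow> (\<forall>s\<in>{1,2,3} \<times> {1..m}. coord3 x s = 0)"
proof
  assume "\<forall>s\<in>{1,2,3} \<times> {1..m}. coord3 x s = 0"
  then have "fst x i = 0 \<and> fst (snd x) i = 0 \<and> snd (snd x) i = 0" for i
    using assms by (cases "i \<in> {1..m}") (force simp: coord3_conv vecs_def)+
  then show "x = 0"
    by (simp add: prod_eq_iff fun_eq_iff)
qed (simp add: coord3_conv)

lemma syndrome_mem_Delta3: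
  assumes "N \<subseteq> Delta m P \<times> Delta m Q \<times> Delta m R"
  shows "syndrome N c \<in> Delta m P \<times> Delta m Q \<times> Delta m R"
proof -
  have "fst (syndrome N c) = (\<Sum>x\<in>N. fscale (c x) (fst x))"
    "fst (snd (syndrome N c)) = (\<Sum>x\<in>N. fscale (c x) (fst (snd x)))"
    "snd (snd (syndrome N c)) = (\<Sum>x\<in>N. fscale (c x) (snd (snd x)))"
    by (simp_all add: syndrome_def fst_sum snd_sum smult3_def fscale_def case_prod_beta)
  then show ?thesis
    using assms by (auto simp: mem_Times_iff intro!: fv.subspace_sum[OF subspace_Delta] fv.subspace_scale[OF subspace_Delta])
qed

lemma syndrome_add: "syndrome N (c + d) = syndrome N c + syndrome N d"
  and syndrome_diff: "syndrome N (c - d) = syndrome N c - syndrome N d"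
  and syndrome_fscale: "syndrome N (fscale a c) = smult3 a (syndrome N c)"
  by (simp_all add: syndrome_def v3.scale_left_distrib v3.scale_left_diff_distrib sum.distrib
      sum_subtractf v3.scale_sum_right)

lemma subspace_syndrome_kernel: "fv.subspace (syndrome_kernel N)"
  by (auto simp: fv.subspace_def syndrome_kernel_def syndrome_add syndrome_fscale)
    (simp add: syndrome_def)

lemma dual_code_of_eq_syndrome_kernel:
  assumes "Nbar \<subseteq> vecs m \<times> vecs m \<times> vecs m"
  shows "dual_code Nbar (code_of m Nbar) = syndrome_kernel Nbar"
proof -
  have "syndrome Nbar c = 0 \<longleftrightarrow> (\<forall>s\<in>{1,2,3} \<times> {1..m}. coord3 (syndrome Nbar c) s = 0)" for c
    using syndrome_mem_Delta3[of Nbar m "{1..m}" "{1..m}" "{1..m}"] assms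
    by (intro vec3_eq_0_iff_coord3) (simp add: vecs_eq_Delta)
  then have "syndrome Nbar c = 0 \<longleftrightarrow>
      (\<forall>s\<in>{1,2,3} \<times> {1..m}. (\<Sum>x\<in>Nbar. c x * (if x \<in> Nbar then coord3 x s else 0)) = 0)" for c
    by (simp add: coord3_syndrome cong: sum.cong)
  then show ?thesis
    unfolding code_of_def dual_code_span by (auto simp: dual_code_def syndrome_kernel_def gen_rows_def)
qed

lemma syndrome_eq_sum_support:
  assumes "finite N" "\<And>x. x \<notin> N \<Longrightarrow> c x = 0"
  shows "syndrome N c = (\<Sum>x\<in>{x. c x \<noteq> 0}. smult3 (c x) x)"
  unfolding syndrome_def using assms by (intro sum.mono_neutral_right) auto

lemma weight_ge_3_if_proj_reps:
  assumes reps: "is_proj_reps N Nbar" "0 \<notin> N" "finite Nbar"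
    and c: "c \<in> syndrome_kernel Nbar" "c \<noteq> 0"
  shows "3 \<le> weight c"
proof -
  let ?T = "{x. c x \<noteq> 0}"
  have vanish: "\<And>x. x \<notin> Nbar \<Longrightarrow> c x = 0" and "syndrome Nbar c = 0"
    using c(1) unfolding syndrome_kernel_def by blast+
  then have T_Nbar: "?T \<subseteq> Nbar"
    by blast
  then have "finite ?T"
    using reps(3) finite_subset by blast
  have Nbar_N: "Nbar \<subseteq> N"
    using reps(1) by (simp add: is_proj_reps_def)
  have rel: "(\<Sum>x\<in>?T. smult3 (c x) x) = 0"
    using \<open>syndrome Nbar c = 0\<close> syndrome_eq_sum_support[OF reps(3) vanish] by simp
  have "card ?T \<noteq> 0"
    using \<open>finite ?T\<close> c(2) by (auto simp: fun_eq_iff)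
  moreover have "card ?T \<noteq> 1"
  proof
    assume "card ?T = 1"
    then obtain y where "?T = {y}"
      by (auto simp: card_Suc_eq)
    moreover from this have "y \<noteq> 0" "c y \<noteq> 0"
      using T_Nbar Nbar_N reps(2) by blast+
    ultimately show False
      using rel by simp
  qed
  moreover have "card ?T \<noteq> 2"
  proof
    assume "card ?T = 2"
    then obtain y z where T: "?T = {y, z}" "y \<noteq> z"
      by (auto simp: card_2_iff)
    then have "c y \<noteq> 0" "y \<in> Nbar" "z \<in> Nbar"
      using T_Nbar by auto
    moreover have "smult3 (c y) y + smult3 (c z) z = 0"
      using rel T by simp
    ultimately show False
      using proj_reps_pair_independent[OF reps(1,2) _ _ T(2)] by blast
  qed
  ultimately show ?thesis
    unfolding weight_def by linarith
qed

lemma syndrome_kernel_word_of_relation: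
  assumes reps: "is_proj_reps N Nbar" "finite Nbar"
    and T: "T \<subseteq> N" "finite T" "pairwise_nonproportional T"
    and l: "\<And>x. x \<in> T \<Longrightarrow> l x \<noteq> 0"
    and rel: "syndrome T l = 0"
  shows "\<exists>c\<in>syndrome_kernel Nbar. weight c = card T"
proof -
  obtain rep al where rep: "\<And>x. x \<in> T \<Longrightarrow> rep x \<in> Nbar" and al: "\<And>x. x \<in> T \<Longrightarrow> al x \<noteq> 0"
    and rep_al: "\<And>x. x \<in> T \<Longrightarrow> rep x = smult3 (al x) x" and "inj_on rep T"
    using proj_reps_choose[OF reps(1) T(1,3)] by blast
  define c where "c z = (if z \<in> rep ` T then l (inv_into T rep z) / al (inv_into T rep z) else 0)" for z
  have c_rep: "c (rep x) = l x / al x" if "x \<in> T" for x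
    using that \<open>inj_on rep T\<close> by (simp add: c_def)
  have support: "{z. c z \<noteq> 0} = rep ` T"
    using l al by (auto simp: c_def \<open>inj_on rep T\<close>)
  have "rep ` T \<subseteq> Nbar"
    using rep by blast
  then have c_vanish: "c z = 0" if "z \<notin> Nbar" for z
    unfolding c_def using that by (metis subsetD)
  have "syndrome Nbar c = (\<Sum>z\<in>{z. c z \<noteq> 0}. smult3 (c z) z)"
    by (rule syndrome_eq_sum_support[OF reps(2) c_vanish])
  also have "\<dots> = (\<Sum>z\<in>rep ` T. smult3 (c z) z)"
    by (simp only: support)
  also have "\<dots> = (\<Sum>x\<in>T. smult3 (c (rep x)) (rep x))"
    by (rule sum.reindex[OF \<open>inj_on rep T\<close>, unfolded comp_def])
  also have "\<dots> = syndrome T l"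
    unfolding syndrome_def
  proof (rule sum.cong)
    fix x assume "x \<in> T"
    then show "smult3 (c (rep x)) (rep x) = smult3 (l x) x"
      using al[OF \<open>x \<in> T\<close>] by (subst c_rep) (simp_all add: rep_al)
  qed simp
  finally have "syndrome Nbar c = 0"
    using rel by simp
  with c_vanish have "c \<in> syndrome_kernel Nbar"
    unfolding syndrome_kernel_def by blast
  moreover have "weight c = card T"
    unfolding weight_def support using \<open>inj_on rep T\<close> by (rule card_image)
  ultimately show ?thesis
    by blast
qed

section \<open>The dual code of a projective system of N2\<close>

locale N2_code =
  fixes m :: nat and A B C :: "nat set" and Nbar :: "'a::{field,finite} vec3 set"
  assumes B_sub_A: "B \<subseteq> A" and A_psub: "A \<subset> {1..m}" and C_sub: "C \<subseteq> {1..m}"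
    and reps: "is_proj_reps (N2 m A B C) Nbar"
begin

lemma Nbar_subset: "Nbar \<subseteq> N2 m A B C"
  using reps by (simp add: is_proj_reps_def)

lemma finite_Nbar: "finite Nbar"
  using Nbar_subset finite_N2 finite_subset by blast

lemma card_Nbar:
  "card Nbar * (CARD('a) - 1) = 2 * CARD('a) ^ (card B + card C) * (CARD('a) ^ m - CARD('a) ^ card A)"
  using card_proj_reps[OF reps zero_notin_N2 smult3_in_N2] card_N2[OF B_sub_A _ C_sub, where 'a='a] A_psub
  by simp

lemma card_Nbar_eq_div:
  "card Nbar = 2 * CARD('a) ^ (card B + card C) * (CARD('a) ^ m - CARD('a) ^ card A) div (CARD('a) - 1)"
  using one_less_card_field[where 'a='a] by (simp flip: card_Nbar)

lemma card_Nbar_if_card_2: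
  assumes "CARD('a) = 2" "card A = m - 1"
  shows "card Nbar = 2 ^ (m + card B + card C)"
proof -
  obtain m' where "m = Suc m'"
    using A_psub by (cases m) auto
  then show ?thesis
    using card_Nbar assms by (simp add: power_add)
qed

lemma Nbar_subset_vecs: "Nbar \<subseteq> vecs m \<times> Delta m C \<times> vecs m"
  using Nbar_subset N2_subset Delta_c_subset_vecs by fastforce

lemma dual_code_eq_syndrome_kernel: "dual_code Nbar (code_of m Nbar) = syndrome_kernel Nbar"
proof (rule dual_code_of_eq_syndrome_kernel)
  show "Nbar \<subseteq> vecs m \<times> vecs m \<times> vecs m"
    using Nbar_subset_vecs Delta_mono[OF C_sub] by (auto simp: vecs_eq_Delta)
qed

lemma syndrome_image:
  "syndrome Nbar ` {c. \<forall>x. x \<notin> Nbar \<longrightarrow> c x = 0} = vecs m \<times> Delta m C \<times> vecs m"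
  (is "syndrome Nbar ` ?V = _")
proof
  show "syndrome Nbar ` ?V \<subseteq> vecs m \<times> Delta m C \<times> vecs m"
    unfolding vecs_eq_Delta
    by (intro image_subsetI syndrome_mem_Delta3 Nbar_subset_vecs[unfolded vecs_eq_Delta])
  show "vecs m \<times> Delta m C \<times> vecs m \<subseteq> syndrome Nbar ` ?V"
  proof (rule N2_generates[OF A_psub])
    show "N2 m A B C \<subseteq> syndrome Nbar ` ?V"
    proof
      fix x :: "'a vec3" assume "x \<in> N2 m A B C"
      with reps obtain y \<alpha> where y: "y \<in> Nbar" "\<alpha> \<noteq> 0" "y = smult3 \<alpha> x"
        by (rule proj_reps_exists)
      define c where "c z = (if z = y then inverse \<alpha> else 0)" for z
      have "syndrome Nbar c = (\<Sum>z\<in>Nbar. if z = y then smult3 (inverse \<alpha>) y else 0)"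
        unfolding syndrome_def c_def by (intro sum.cong) simp_all
      also have "\<dots> = x"
        using y finite_Nbar by simp
      finally show "x \<in> syndrome Nbar ` ?V"
        using y(1) by (intro image_eqI[of _ _ c]) (auto simp: c_def)
    qed
  next
    fix g h :: "'a vec3" assume "g \<in> syndrome Nbar ` ?V" "h \<in> syndrome Nbar ` ?V"
    then obtain c d where cd: "c \<in> ?V" "d \<in> ?V" "g = syndrome Nbar c" "h = syndrome Nbar d"
      by blast
    then show "g + h \<in> syndrome Nbar ` ?V"
      by (intro image_eqI[of _ _ "c + d"]) (auto simp: syndrome_add)
    from cd show "g - h \<in> syndrome Nbar ` ?V"
      by (intro image_eqI[of _ _ "c - d"]) (auto simp: syndrome_diff)
  qed
qed

lemma finite_syndrome_kernel: "finite (syndrome_kernel Nbar)"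
  using finite_vanishing_outside[OF finite_Nbar]
  by (rule finite_subset[rotated]) (auto simp: syndrome_kernel_def)

lemma dim_syndrome_kernel: "fv.dim (syndrome_kernel Nbar) = card Nbar - (2 * m + card C)"
proof -
  let ?V = "{c :: 'a vec3 \<Rightarrow> 'a. \<forall>x. x \<notin> Nbar \<longrightarrow> c x = 0}"
  let ?q = "CARD('a)"
  have "{c \<in> ?V. syndrome Nbar c = 0} = syndrome_kernel Nbar"
    unfolding syndrome_kernel_def by blast
  then have "card ?V = card (syndrome Nbar ` ?V) * card (syndrome_kernel Nbar)"
    using card_eq_card_image_mult_card_kernel[OF finite_vanishing_outside[OF finite_Nbar], of "syndrome Nbar"]
    by (simp add: syndrome_diff)
  moreover have "card ?V = ?q ^ card Nbar"
    by (rule card_vanishing_outside[OF finite_Nbar])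
  moreover have "card (syndrome Nbar ` ?V) = ?q ^ (m + card C + m)"
    unfolding syndrome_image using C_sub by (simp add: card_cartesian_product card_vecs card_Delta power_add)
  moreover have "card (syndrome_kernel Nbar) = ?q ^ fv.dim (syndrome_kernel Nbar)"
    by (rule card_subspace_eq_power_dim[OF subspace_syndrome_kernel finite_syndrome_kernel])
  ultimately have "?q ^ card Nbar = ?q ^ (m + card C + m + fv.dim (syndrome_kernel Nbar))"
    by (simp add: power_add)
  then have "card Nbar = m + card C + m + fv.dim (syndrome_kernel Nbar)"
    using one_less_card_field[where 'a='a] by simp
  then show ?thesis
    by simp
qed

lemma code_params_dual_code:
  assumes "min_dist (syndrome_kernel Nbar) = d"
  shows "code_params Nbar (dual_code Nbar (code_of m Nbar)) (card Nbar) (card Nbar - 2 * m - card C) d"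
  unfolding code_params_def dual_code_eq_syndrome_kernel
  using finite_Nbar subspace_syndrome_kernel dim_syndrome_kernel assms
  by (auto simp: syndrome_kernel_def)

lemma weight_3_word_of_sum:
  fixes x y :: "'a vec3"
  assumes "x \<in> N2 m A B C" "y \<in> N2 m A B C" "x + y \<in> N2 m A B C" "x \<noteq> y"
    and "pairwise_nonproportional {x, y, x + y}"
  obtains c where "c \<in> syndrome_kernel Nbar" "weight c = 3"
proof -
  have "x \<noteq> 0" "y \<noteq> 0"
    using assms(1,2) zero_notin_N2 by blast+
  then have distinct: "distinct [x, y, x + y]"
    using assms(4) by auto
  define l where "l u = (if u = x + y then -1 else 1 :: 'a)" for u
  have rel: "syndrome {x, y, x + y} l = 0"
    using distinct by (simp add: syndrome_def l_def)
  have "\<exists>c\<in>syndrome_kernel Nbar. weight c = card {x, y, x + y}"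
    by (rule syndrome_kernel_word_of_relation[OF reps finite_Nbar _ _ assms(5) _ rel])
      (simp_all add: l_def assms(1-3))
  with distinct that show ?thesis
    by auto
qed

lemma weight_4_word_of_relation_if_card_2:
  fixes x1 x2 x3 x4 :: "'a vec3"
  assumes "CARD('a) = 2" "{x1, x2, x3, x4} \<subseteq> N2 m A B C" "distinct [x1, x2, x3, x4]"
    and "x1 + x4 = x2 + x3"
  obtains c where "c \<in> syndrome_kernel Nbar" "weight c = 4"
proof -
  define l where "l u = (if u = x2 \<or> u = x3 then -1 else 1 :: 'a)" for u
  have "l x1 = 1" "l x2 = -1" "l x3 = -1" "l x4 = 1"
    using assms(3) by (auto simp: l_def)
  then have "syndrome {x1, x2, x3, x4} l = x1 + x4 - (x2 + x3)"
    using assms(3) by (simp add: syndrome_def algebra_simps)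
  then have rel: "syndrome {x1, x2, x3, x4} l = 0"
    using assms(4) by simp
  have "pairwise_nonproportional {x1, x2, x3, x4}"
    by (simp add: pairwise_nonproportional_def smult3_eq_self_if_card_2[OF assms(1)])
  then have "\<exists>c\<in>syndrome_kernel Nbar. weight c = card {x1, x2, x3, x4}"
    using syndrome_kernel_word_of_relation[OF reps finite_Nbar assms(2) _ _ _ rel]
    by (simp add: l_def)
  with assms(3) that show ?thesis
    by auto
qed

lemma obtain_weight_3_word_if_card_ge_3:
  assumes "3 \<le> CARD('a)" "C \<noteq> {}"
  obtains c where "c \<in> syndrome_kernel Nbar" "weight c = 3"
proof -
  obtain t where t: "t \<in> {1..m}" "t \<notin> A"
    using A_psub by blast
  obtain k where k: "k \<in> C"
    using assms(2) by blast
  obtain \<alpha> :: 'a where \<alpha>: "\<alpha> \<noteq> 0" "1 + \<alpha> \<noteq> 0"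
    using exists_not_0_not_minus_1[OF assms(1)] by blast
  define e f :: "nat \<Rightarrow> 'a" where "e = 0(t := 1)" and "f = 0(k := 1)"
  define x y :: "'a vec3" where "x = (0, 0, e)" and "y = (0, f, fscale \<alpha> e)"
  have "x + y = (0, f, fscale (1 + \<alpha>) e)"
    by (simp add: x_def y_def fun_eq_iff algebra_simps)
  have "e \<in> Delta_c m A"
    using t by (intro Delta_c_memI[where i = t]) (auto simp: e_def vecs_def)
  moreover have "f \<in> Delta m C"
    using k C_sub by (auto simp: f_def Delta_def vecs_def supp_def)
  ultimately have N2: "x \<in> N2 m A B C" "y \<in> N2 m A B C" "x + y \<in> N2 m A B C"
    unfolding \<open>x + y = _\<close> unfolding x_def y_def using \<alpha> by (auto intro!: N2_memI fscale_in_Delta_c)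
  have coords: "coord3 x (2, k) = 0" "coord3 y (2, k) = 1" "coord3 (x + y) (2, k) = 1"
    "coord3 x (3, t) = 1" "coord3 y (3, t) = \<alpha>" "coord3 (x + y) (3, t) = 1 + \<alpha>"
    unfolding \<open>x + y = _\<close> by (simp_all add: x_def y_def coord3_def e_def f_def)
  show ?thesis
  proof (rule weight_3_word_of_sum[OF N2])
    show "x \<noteq> y"
      using coords by auto
    show "pairwise_nonproportional {x, y, x + y}"
      unfolding pairwise_nonproportional_def
    proof (intro ballI allI impI)
      fix u v \<beta> assume uv: "u \<in> {x, y, x + y}" "v \<in> {x, y, x + y}" and "v = smult3 \<beta> u"
      show "v = u"
      proof (rule ccontr)
        assume "v \<noteq> u"
        with uv have "coord3 u (2, k) * coord3 v (3, t) \<noteq> coord3 u (3, t) * coord3 v (2, k)"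
          using coords \<alpha> by auto
        then show False
          using not_proportional_if_det \<open>v = smult3 \<beta> u\<close> by blast
      qed
    qed
  qed (rule that)
qed

lemma obtain_weight_3_word_if_card_2:
  assumes "CARD('a) = 2" "card A + 2 \<le> m"
  obtains c where "c \<in> syndrome_kernel Nbar" "weight c = 3"
proof -
  have "A \<subseteq> {1..m}"
    using A_psub by blast
  then have "card ({1..m} - A) \<ge> 2"
    using assms(2) by (simp add: card_Diff_subset finite_subset)
  then obtain S where S: "S \<subseteq> {1..m} - A" "card S = 2"
    by (rule obtain_subset_with_card_n)
  then obtain t t' where "S = {t, t'}" "t \<noteq> t'"
    by (auto simp: card_2_iff)
  with S(1) have t: "t \<in> {1..m}" "t \<notin> A" and t': "t' \<in> {1..m}" "t' \<notin> A"
    by auto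
  define e e' :: "nat \<Rightarrow> 'a" where "e = 0(t := 1)" and "e' = 0(t' := 1)"
  have "e \<in> Delta_c m A" "e + e' \<in> Delta_c m A"
    using t t' \<open>t \<noteq> t'\<close> by (auto intro!: Delta_c_memI[where i = t] simp: e_def e'_def vecs_def)
  moreover have "e' \<in> Delta_c m A"
    using t' by (auto intro!: Delta_c_memI[where i = t'] simp: e'_def vecs_def)
  ultimately have "(0, 0, e) \<in> N2 m A B C" "(0, 0, e') \<in> N2 m A B C" "(0, 0, e) + (0, 0, e') \<in> N2 m A B C"
    by (auto intro!: N2_memI)
  moreover have "(0, 0, e) \<noteq> (0, 0, e')"
    using \<open>t \<noteq> t'\<close> by (auto simp: e_def e'_def fun_eq_iff dest: spec[of _ t])
  moreover have "pairwise_nonproportional {(0, 0, e), (0, 0, e'), (0, 0, e) + (0, 0, e')}"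
    by (simp add: pairwise_nonproportional_def smult3_eq_self_if_card_2[OF assms(1)])
  ultimately show ?thesis
    using weight_3_word_of_sum that by blast
qed

lemma obtain_weight_4_word_if_card_2:
  assumes "CARD('a) = 2" "A \<noteq> {}" "C \<noteq> {}"
  obtains c where "c \<in> syndrome_kernel Nbar" "weight c = 4"
proof -
  obtain t where t: "t \<in> {1..m}" "t \<notin> A"
    using A_psub by blast
  obtain a k where a: "a \<in> A" and k: "k \<in> C"
    using assms(2,3) by blast
  have "a \<in> {1..m}" "a \<noteq> t"
    using a t A_psub by auto
  define e f g :: "nat \<Rightarrow> 'a" where "e = 0(t := 1)" and "f = 0(k := 1)" and "g = 0(a := 1)"
  define x1 x2 x3 x4 :: "'a vec3" where "x1 = (0, 0, e)" and "x2 = (0, f, e)"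
    and "x3 = (0, 0, e + g)" and "x4 = (0, f, e + g)"
  have "e \<in> Delta_c m A" "e + g \<in> Delta_c m A"
    using t \<open>a \<in> {1..m}\<close> \<open>a \<noteq> t\<close>
    by (auto intro!: Delta_c_memI[where i = t] simp: e_def g_def vecs_def)
  moreover have "f \<in> Delta m C"
    using k C_sub by (auto simp: f_def Delta_def vecs_def supp_def)
  ultimately have "{x1, x2, x3, x4} \<subseteq> N2 m A B C"
    unfolding x1_def x2_def x3_def x4_def by (auto intro!: N2_memI)
  moreover have "coord3 x1 (2, k) = 0" "coord3 x2 (2, k) = 1" "coord3 x3 (2, k) = 0" "coord3 x4 (2, k) = 1"
    "coord3 x1 (3, a) = 0" "coord3 x2 (3, a) = 0" "coord3 x3 (3, a) = 1" "coord3 x4 (3, a) = 1"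
    using \<open>a \<noteq> t\<close> by (simp_all add: x1_def x2_def x3_def x4_def coord3_def e_def f_def g_def)
  then have "distinct [x1, x2, x3, x4]"
    by auto
  moreover have "x1 + x4 = x2 + x3"
    by (simp add: x1_def x2_def x3_def x4_def)
  ultimately show ?thesis
    using weight_4_word_of_relation_if_card_2[OF assms(1)] that by blast
qed

lemma even_weight_if_card_2:
  assumes "CARD('a) = 2" "card A = m - 1" "c \<in> syndrome_kernel Nbar"
  shows "even (weight c)"
proof -
  obtain t where t: "t \<in> {1..m}" "t \<notin> A"
    using A_psub by blast
  have "A \<subseteq> {1..m}"
    using A_psub by blast
  then have "card ({1..m} - A) = 1"
    using assms(2) t by (simp add: card_Diff_subset finite_subset)
  then have outside: "{1..m} - A = {t}"
    using t by (metis DiffI card_1_singletonE singletonD)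
  have vanish: "\<And>x. x \<notin> Nbar \<Longrightarrow> c x = 0" and "syndrome Nbar c = 0"
    using assms(3) unfolding syndrome_kernel_def by blast+
  \<comment> \<open>Every column has entry 1 at \<open>(3, t)\<close>, so this entry of the syndrome counts the support.\<close>
  then have "0 = (\<Sum>x\<in>Nbar. c x * coord3 x (3, t))"
    using coord3_syndrome[of Nbar c "(3, t)"] by (simp add: coord3_conv)
  also have "\<dots> = (\<Sum>x\<in>{x. c x \<noteq> 0}. 1)"
  proof (rule sum.mono_neutral_cong_right[OF finite_Nbar])
    show "{x. c x \<noteq> 0} \<subseteq> Nbar"
      using vanish by blast
    show "c x * coord3 x (3, t) = 1" if "x \<in> {x. c x \<noteq> 0}" for x
    proof -
      have "x \<in> Nbar" "c x = 1"
        using that vanish card_2_field_cases[OF assms(1), of "c x"] by blast+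
      moreover from \<open>x \<in> Nbar\<close> have "snd (snd x) t = 1"
        using N2_third_block_eq_1_if_card_2[OF assms(1) outside] Nbar_subset by blast
      ultimately show ?thesis
        by (simp add: coord3_conv)
    qed
  qed auto
  also have "\<dots> = of_nat (weight c)"
    by (simp add: weight_def)
  finally show ?thesis
    using card_2_field_of_nat_eq_0[OF assms(1)] by metis
qed

lemma min_dist_eq_3:
  assumes "3 \<le> CARD('a) \<and> C \<noteq> {} \<or> CARD('a) = 2 \<and> card A + 2 \<le> m"
  shows "min_dist (syndrome_kernel Nbar) = 3"
proof -
  obtain c where "c \<in> syndrome_kernel Nbar" "weight c = 3"
    using assms obtain_weight_3_word_if_card_ge_3 obtain_weight_3_word_if_card_2 by blast
  moreover from this have "c \<noteq> 0"
    by (auto simp: weight_def)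
  ultimately show ?thesis
    using min_dist_eqI[OF finite_syndrome_kernel]
      weight_ge_3_if_proj_reps[OF reps zero_notin_N2 finite_Nbar] by blast
qed

lemma min_dist_eq_4:
  assumes "CARD('a) = 2" "card A = m - 1" "A \<noteq> {}" "C \<noteq> {}"
  shows "min_dist (syndrome_kernel Nbar) = 4"
proof -
  obtain c where "c \<in> syndrome_kernel Nbar" "weight c = 4"
    using obtain_weight_4_word_if_card_2[OF assms(1,3,4)] by blast
  moreover from this have "c \<noteq> 0"
    by (auto simp: weight_def)
  moreover have "4 \<le> weight c'" if "c' \<in> syndrome_kernel Nbar" "c' \<noteq> 0" for c'
    using weight_ge_3_if_proj_reps[OF reps zero_notin_N2 finite_Nbar that]
      even_weight_if_card_2[OF assms(1,2) that(1)] by (cases "weight c' = 3") auto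
  ultimately show ?thesis
    using min_dist_eqI[OF finite_syndrome_kernel] by blast
qed

end

theorem mainTheorem15:
  fixes m :: nat and A B C :: "nat set"
    and Nbar :: "('a::{field,finite}) vec3 set"
  assumes "m \<ge> 2"
    and "A \<noteq> {}" and "B \<noteq> {}" and "C \<noteq> {}"
    and "C \<subseteq> {1..m}"
    and "B \<subseteq> A" and "A \<subset> {1..m}"
    and "is_proj_reps (N2 m A B C) Nbar"
  shows "((CARD('a) \<ge> 3 \<or> (CARD('a) = 2 \<and> card A \<le> m - 2)) \<longrightarrow>
           code_params Nbar (dual_code Nbar (code_of m Nbar))
             (2 * CARD('a) ^ (card B + card C) * (CARD('a) ^ m - CARD('a) ^ card A) div (CARD('a) - 1))
             (2 * CARD('a) ^ (card B + card C) * (CARD('a) ^ m - CARD('a) ^ card A) div (CARD('a) - 1)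
                - 2 * m - card C)
             3)
       \<and> ((CARD('a) = 2 \<and> card A = m - 1) \<longrightarrow>
           code_params Nbar (dual_code Nbar (code_of m Nbar))
             (2 ^ (m + card B + card C)) (2 ^ (m + card B + card C) - 2 * m - card C) 4
         \<and> dist_optimal TYPE('a)
             (2 ^ (m + card B + card C)) (2 ^ (m + card B + card C) - 2 * m - card C) 4)"
proof -
  interpret N2_code m A B C Nbar
    using assms by unfold_locales
  let ?dual = "dual_code Nbar (code_of m Nbar)"
  let ?n = "2 * CARD('a) ^ (card B + card C) * (CARD('a) ^ m - CARD('a) ^ card A) div (CARD('a) - 1)"
  let ?N = "2 ^ (m + card B + card C) :: nat"
  have "code_params Nbar ?dual ?n (?n - 2 * m - card C) 3"
    if "3 \<le> CARD('a) \<or> CARD('a) = 2 \<and> card A \<le> m - 2"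
    unfolding card_Nbar_eq_div[symmetric]
    by (rule code_params_dual_code[OF min_dist_eq_3]) (use that assms(1,4) in auto)
  moreover have "code_params Nbar ?dual ?N (?N - 2 * m - card C) 4"
    if "CARD('a) = 2" "card A = m - 1"
    unfolding card_Nbar_if_card_2[OF that, symmetric]
    by (rule code_params_dual_code[OF min_dist_eq_4[OF that assms(2,4)]])
  moreover have "dist_optimal TYPE('a) ?N (?N - 2 * m - card C) 4" if "CARD('a) = 2"
  proof -
    have "card B \<noteq> 0" "card C \<noteq> 0"
      using assms(3-7) by (meson card_0_eq finite_atLeastAtMost finite_subset psubsetE subset_trans)+
    then have "CARD('a) ^ (2 * m + card C) < ?N choose 2"
      using two_power_less_choose_two[of "2 * m + card C" "m + card B + card C"] that by simp
    then show ?thesis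
      by (simp add: dist_optimal_4_if_power_less_choose_two diff_diff_left)
  qed
  ultimately show ?thesis
    by blast
qed

end
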